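(* There is an absolute constant $c>0$ such that for all $\varepsilon,\delta\in(0,1)$ and every positive integer $m< c\,\varepsilon^{-1}\delta^{-1}$, there exists a finite multiset $A$ of points in $\mathbb{R}^d$ such that, if $S$ consists of $m$ points drawn independently and uniformly at random from $A$, then the empirical mean $\hat\mu=\frac1m\sum_{p\in S}p$ fails to be a $(1+\varepsilon)$-approximate mean of $A$ with probability greater than $\delta$. In other words, $\Omega(\varepsilon^{-1}\delta^{-1})$ independently sampled points are required for the empirical mean to be a $(1+\varepsilon)$-approximate mean with probability at least $1-\delta$ on every instance.
   Context: For a finite multiset $A\subset\mathbb{R}^d$, let $\mathrm{Opt}=\min_{x\in\mathbb{R}^d}\sum_{p\in A}\|p-x\|^2$. A point $x$ is a $(1+\varepsilon)$-approximate mean of $A$ if $\sum_{p\in A}\|p-x\|^2\le(1+\varepsilon)\mathrm{Opt}$. *)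

theory Defs
  imports "HOL-Analysis.Analysis" "HOL-Probability.Probability"
begin

text \<open>Points of R^d are represented as functions nat => real vanishing at all
coordinates i >= d (so the dimension d can be quantified inside the statement).\<close>

definition Rd :: "nat \<Rightarrow> (nat \<Rightarrow> real) set" where
  "Rd d = {x. \<forall>i\<ge>d. x i = 0}"

definition sqdist :: "nat \<Rightarrow> (nat \<Rightarrow> real) \<Rightarrow> (nat \<Rightarrow> real) \<Rightarrow> real" where
  "sqdist d p x = (\<Sum>i<d. (p i - x i)^2)"

definition cost :: "nat \<Rightarrow> (nat \<Rightarrow> real) multiset \<Rightarrow> (nat \<Rightarrow> real) \<Rightarrow> real" where
  "cost d A x = (\<Sum>p\<in>#A. sqdist d p x)"

definition Opt :: "nat \<Rightarrow> (nat \<Rightarrow> real) multiset \<Rightarrow> real" where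
  "Opt d A = (INF x\<in>Rd d. cost d A x)"

definition approx_mean :: "nat \<Rightarrow> real \<Rightarrow> (nat \<Rightarrow> real) multiset \<Rightarrow> (nat \<Rightarrow> real) \<Rightarrow> bool" where
  "approx_mean d \<epsilon> A x \<longleftrightarrow> cost d A x \<le> (1 + \<epsilon>) * Opt d A"

definition emp_mean :: "nat \<Rightarrow> (nat \<Rightarrow> nat \<Rightarrow> real) \<Rightarrow> (nat \<Rightarrow> real)" where
  "emp_mean m S = (\<lambda>i. (\<Sum>j<m. S j i) / real m)"

definition sample_pmf :: "nat \<Rightarrow> (nat \<Rightarrow> real) multiset \<Rightarrow> (nat \<Rightarrow> nat \<Rightarrow> real) pmf" where
  "sample_pmf m A = Pi_pmf {..<m} (\<lambda>_. 0) (\<lambda>_. pmf_of_multiset A)"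

end

theory Submission
  imports Defs
begin

(* Take n - 1 points at the origin and one point at e\<^sub>0. The mean is e\<^sub>0 / n, and on the
  axis through e\<^sub>0 the cost exceeds its minimum (n - 1) / n by n (t - 1/n)\<^sup>2. If the sample
  contains k copies of e\<^sub>0, the empirical mean is (k / m) e\<^sub>0. For small \<delta> choose
  n \<approx> m / (4\<delta>): a sample that hits e\<^sub>0 at all overshoots the mean by at least 1/(2m), which
  costs n / (4m\<^sup>2) \<ge> 1 / (16\<delta>m) > \<epsilon>, and it hits e\<^sub>0 with probability
  1 - (1 - 1/n)\<^sup>m > \<delta>. For \<delta> > 1/8 choose n = 2m: then k / m is never within 1/(2m) of
  1/n, so every sample fails. *)

definition axis_point :: "real \<Rightarrow> nat \<Rightarrow> real" where
  "axis_point a = (\<lambda>i. if i = 0 then a else 0)"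

definition spike :: "nat \<Rightarrow> (nat \<Rightarrow> real) multiset" where
  "spike n = add_mset (axis_point 1) (replicate_mset (n - 1) (axis_point 0))"

lemma axis_point_eq_iff [simp]: "axis_point a = axis_point b \<longleftrightarrow> a = b"
  by (metis axis_point_def)

lemma axis_point_in_Rd: "1 \<le> d \<Longrightarrow> axis_point a \<in> Rd d"
  by (auto simp: axis_point_def Rd_def)

lemma set_mset_spike_subset_Rd: "1 \<le> d \<Longrightarrow> set_mset (spike n) \<subseteq> Rd d"
  by (auto simp: spike_def axis_point_in_Rd)

lemma spike_nonempty: "spike n \<noteq> {#}"
  by (simp add: spike_def)

lemma sqdist_axis_point:
  assumes "1 \<le> d"
  shows "sqdist d (axis_point a) (axis_point b) = (a - b)\<^sup>2"
proof -
  have summand: "(\<lambda>i. (axis_point a i - axis_point b i)\<^sup>2) = (\<lambda>i. if i = 0 then (a - b)\<^sup>2 else 0)"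
    by (auto simp: axis_point_def)
  show ?thesis
    using assms unfolding sqdist_def summand by simp
qed

lemma cost_nonneg: "0 \<le> cost d A x"
  unfolding cost_def sqdist_def by (induction A) (auto intro!: sum_nonneg add_nonneg_nonneg)

lemma cost_spike_axis_point:
  assumes "1 \<le> d" "1 \<le> n"
  shows "cost d (spike n) (axis_point t) = (real n - 1) / real n + real n * (t - 1 / real n)\<^sup>2"
  using assms by (simp add: cost_def spike_def sqdist_axis_point of_nat_diff field_simps power2_eq_square)

lemma Opt_spike_le:
  assumes "1 \<le> d" "1 \<le> n"
  shows "Opt d (spike n) \<le> (real n - 1) / real n"
proof -
  have "Opt d (spike n) \<le> cost d (spike n) (axis_point (1 / real n))"
    unfolding Opt_def
    by (rule cINF_lower) (auto intro: axis_point_in_Rd assms cost_nonneg simp: bdd_below_def)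
  also have "\<dots> = (real n - 1) / real n"
    using assms by (simp add: cost_spike_axis_point)
  finally show ?thesis .
qed

lemma not_approx_mean_spike:
  assumes "1 \<le> d" "1 \<le> n" "0 \<le> \<epsilon>" "\<epsilon> < real n * (t - 1 / real n)\<^sup>2"
  shows "\<not> approx_mean d \<epsilon> (spike n) (axis_point t)"
proof -
  have eps_frac: "\<epsilon> * ((real n - 1) / real n) \<le> \<epsilon>"
    using assms(2,3) by (intro mult_left_le) auto
  have "(1 + \<epsilon>) * Opt d (spike n) \<le> (1 + \<epsilon>) * ((real n - 1) / real n)"
    using Opt_spike_le[OF assms(1,2)] assms(3) by (intro mult_left_mono) auto
  also have "\<dots> \<le> (real n - 1) / real n + \<epsilon>"
    using eps_frac by (simp only: distrib_right mult_1)
  also have "\<dots> < cost d (spike n) (axis_point t)"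
    using assms by (simp add: cost_spike_axis_point)
  finally show ?thesis
    by (simp add: approx_mean_def)
qed

lemma not_approx_mean_spike_of_hit:
  assumes "1 \<le> d" "0 \<le> \<epsilon>" "0 < m" "2 * real m \<le> real n" "4 * \<epsilon> * (real m)\<^sup>2 < real n"
    and "1 \<le> k"
  shows "\<not> approx_mean d \<epsilon> (spike n) (axis_point (real k / real m))"
proof (rule not_approx_mean_spike)
  have "1 / real n \<le> 1 / (2 * real m)"
    using assms(3,4) by (intro divide_left_mono) auto
  moreover have "1 / real m \<le> real k / real m"
    using assms(6) by (intro divide_right_mono) auto
  ultimately have "1 / (2 * real m) \<le> real k / real m - 1 / real n"
    by (simp add: field_simps)
  then have "(1 / (2 * real m))\<^sup>2 \<le> (real k / real m - 1 / real n)\<^sup>2"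
    using assms(3) by (intro power_mono) auto
  then have "real n * (1 / (2 * real m))\<^sup>2 \<le> real n * (real k / real m - 1 / real n)\<^sup>2"
    by (intro mult_left_mono) auto
  moreover have "\<epsilon> < real n * (1 / (2 * real m))\<^sup>2"
    using assms(3,5) by (simp add: field_simps power2_eq_square)
  ultimately show "\<epsilon> < real n * (real k / real m - 1 / real n)\<^sup>2"
    by linarith
qed (use assms in auto)

lemma not_approx_mean_spike_double:
  assumes "1 \<le> d" "0 \<le> \<epsilon>" "0 < m" "2 * \<epsilon> * real m < 1"
  shows "\<not> approx_mean d \<epsilon> (spike (2 * m)) (axis_point (real k / real m))"
proof (rule not_approx_mean_spike)
  have "\<epsilon> < 1 / (2 * real m)"
    using assms(3,4) by (simp add: field_simps)
  have "1 \<le> (2 * real k - 1)\<^sup>2"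
    by (cases "k = 0") (auto simp: one_le_power)
  then have "1 / (2 * real m) \<le> (2 * real k - 1)\<^sup>2 / (2 * real m)"
    by (intro divide_right_mono) auto
  also have "\<dots> = real (2 * m) * (real k / real m - 1 / real (2 * m))\<^sup>2"
    using assms(3) by (simp add: field_simps power2_eq_square)
  finally show "\<epsilon> < real (2 * m) * (real k / real m - 1 / real (2 * m))\<^sup>2"
    using \<open>\<epsilon> < 1 / (2 * real m)\<close> by linarith
qed (use assms in auto)

definition spike_samples :: "nat \<Rightarrow> (nat \<Rightarrow> nat \<Rightarrow> real) set" where
  "spike_samples m = PiE_dflt {..<m} (\<lambda>_. 0) (\<lambda>_. {axis_point 0, axis_point 1})"

definition missing_samples :: "nat \<Rightarrow> (nat \<Rightarrow> nat \<Rightarrow> real) set" where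
  "missing_samples m = PiE_dflt {..<m} (\<lambda>_. 0) (\<lambda>_. {axis_point 0})"

definition hits :: "nat \<Rightarrow> (nat \<Rightarrow> nat \<Rightarrow> real) \<Rightarrow> nat" where
  "hits m S = card {j. j < m \<and> S j = axis_point 1}"

lemma emp_mean_spike_sample:
  assumes "S \<in> spike_samples m"
  shows "emp_mean m S = axis_point (real (hits m S) / real m)"
proof
  fix i
  have "S j i = (if S j = axis_point 1 then axis_point 1 i else 0)" if "j < m" for j
    using assms that by (auto simp: spike_samples_def PiE_dflt_def axis_point_def)
  then have "(\<Sum>j<m. S j i) = (\<Sum>j<m. if S j = axis_point 1 then axis_point 1 i else 0)"
    by (intro sum.cong) auto
  also have "\<dots> = real (hits m S) * axis_point 1 i"
    by (simp add: sum.If_cases hits_def Int_def conj_commute)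
  finally show "emp_mean m S i = axis_point (real (hits m S) / real m) i"
    by (simp add: emp_mean_def axis_point_def)
qed

lemma hits_pos:
  assumes "S \<in> spike_samples m - missing_samples m"
  shows "1 \<le> hits m S"
proof -
  obtain j where "j < m" "S j = axis_point 1"
    using assms by (auto simp: spike_samples_def missing_samples_def PiE_dflt_def)
  then have "{j. j < m \<and> S j = axis_point 1} \<noteq> {}"
    by blast
  then show ?thesis
    by (simp add: hits_def Suc_le_eq card_gt_0_iff)
qed

lemma prob_spike_samples:
  "measure_pmf.prob (sample_pmf m (spike n)) (spike_samples m) = 1"
proof -
  have "measure_pmf.prob (pmf_of_multiset (spike n)) {axis_point 0, axis_point 1} = 1"
    by (intro measure_pmf.prob_eq_1[THEN iffD2])
      (auto intro!: AE_pmfI simp: spike_nonempty spike_def split: if_splits)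
  then show ?thesis
    by (simp add: sample_pmf_def spike_samples_def measure_Pi_pmf_PiE_dflt)
qed

lemma prob_missing_samples:
  assumes "1 \<le> n"
  shows "measure_pmf.prob (sample_pmf m (spike n)) (missing_samples m) = (1 - 1 / real n) ^ m"
proof -
  have "measure_pmf.prob (pmf_of_multiset (spike n)) {axis_point 0} = 1 - 1 / real n"
    using assms by (simp add: measure_pmf_single spike_nonempty spike_def of_nat_diff field_simps)
  then show ?thesis
    by (simp add: sample_pmf_def missing_samples_def measure_Pi_pmf_PiE_dflt)
qed

(* Bernoulli's inequality for (1 + q)\<^sup>m, applied to (1 - q)\<^sup>m \<le> 1 / (1 + q)\<^sup>m. *)
lemma one_minus_power_lt:
  fixes q \<delta> :: real
  assumes "0 < q" "q < 1" "0 < \<delta>" "\<delta> \<le> 1 / 2" "2 * \<delta> < real m * q"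
  shows "(1 - q) ^ m < 1 - \<delta>"
proof -
  have pos: "0 < (1 - q) ^ m"
    using assms by simp
  have "(1 - q) ^ m * (1 + 2 * \<delta>) < (1 - q) ^ m * (1 + q) ^ m"
    using pos Bernoulli_inequality[of q m] assms by (intro mult_strict_left_mono) auto
  also have "\<dots> = (1 - q\<^sup>2) ^ m"
    by (simp add: power_mult_distrib[symmetric] algebra_simps power2_eq_square)
  also have "\<dots> \<le> 1"
    using assms by (intro power_le_one) (auto simp: power2_eq_square mult_le_one)
  also have "\<dots> \<le> (1 - \<delta>) * (1 + 2 * \<delta>)"
    using assms mult_nonneg_nonneg[of \<delta> "1 - 2 * \<delta>"] by (simp add: algebra_simps)
  finally show ?thesis
    using assms by simp
qed

lemma spike_fails_small_delta:
  assumes "1 \<le> d" "0 < \<epsilon>" "0 < \<delta>" "\<delta> \<le> 1 / 8" "0 < m" "16 * \<epsilon> * \<delta> * real m < 1"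
  defines "n \<equiv> nat \<lceil>real m / (4 * \<delta>)\<rceil>"
  shows "\<delta> < measure_pmf.prob (sample_pmf m (spike n))
                {S. \<not> approx_mean d \<epsilon> (spike n) (emp_mean m S)}"
proof -
  have "real n = \<lceil>real m / (4 * \<delta>)\<rceil>"
    using assms(3) unfolding n_def by simp
  then have n_ge: "real m / (4 * \<delta>) \<le> real n" and n_lt: "real n < real m / (4 * \<delta>) + 1"
    by linarith+
  have "2 * real m \<le> real m / (4 * \<delta>)"
    using assms(3-5) by (simp add: field_simps)
  then have n_2m: "2 * real m \<le> real n" and n_pos: "1 \<le> n"
    using n_ge assms(5) by linarith+
  have "4 * \<epsilon> * (real m)\<^sup>2 < real m / (4 * \<delta>)"
    using assms(3,5,6) by (simp add: field_simps power2_eq_square)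
  then have hit_fails: "spike_samples m - missing_samples m
      \<subseteq> {S. \<not> approx_mean d \<epsilon> (spike n) (emp_mean m S)}"
    using not_approx_mean_spike_of_hit[OF assms(1) _ assms(5) n_2m] hits_pos emp_mean_spike_sample
      n_ge assms(2) by auto
  have "missing_samples m \<subseteq> spike_samples m"
    by (auto simp: missing_samples_def spike_samples_def PiE_dflt_def)
  then have "measure_pmf.prob (sample_pmf m (spike n)) (spike_samples m - missing_samples m)
      = 1 - (1 - 1 / real n) ^ m"
    by (simp add: measure_pmf.finite_measure_Diff prob_spike_samples prob_missing_samples[OF n_pos])
  moreover have "(1 - 1 / real n) ^ m < 1 - \<delta>"
  proof (rule one_minus_power_lt)
    have "real n < real m / (2 * \<delta>)"
      using n_lt assms(3-5) by (simp add: field_simps)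
    then show "2 * \<delta> < real m * (1 / real n)"
      using n_2m assms(3,5) by (simp add: field_simps)
  qed (use n_2m assms(3-5) in auto)
  ultimately show ?thesis
    using measure_pmf.finite_measure_mono[OF hit_fails, where M = "sample_pmf m (spike n)"]
    by simp
qed

lemma spike_fails_large_delta:
  assumes "1 \<le> d" "0 < \<epsilon>" "1 / 8 < \<delta>" "\<delta> < 1" "0 < m" "16 * \<epsilon> * \<delta> * real m < 1"
  shows "\<delta> < measure_pmf.prob (sample_pmf m (spike (2 * m)))
                {S. \<not> approx_mean d \<epsilon> (spike (2 * m)) (emp_mean m S)}"
proof -
  have "16 * \<epsilon> * (1 / 8) * real m \<le> 16 * \<epsilon> * \<delta> * real m"
    using assms(2,3) by (intro mult_right_mono mult_left_mono) auto
  then have "2 * \<epsilon> * real m < 1"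
    using assms(6) by (simp add: algebra_simps)
  then have "spike_samples m \<subseteq> {S. \<not> approx_mean d \<epsilon> (spike (2 * m)) (emp_mean m S)}"
    using not_approx_mean_spike_double[OF assms(1) _ assms(5)] emp_mean_spike_sample assms(2) by auto
  from measure_pmf.finite_measure_mono[OF this, where M = "sample_pmf m (spike (2 * m))"]
  show ?thesis
    using prob_spike_samples assms(4) by simp
qed

theorem theorem5p2:
  shows "\<exists>c::real. c > 0 \<and>
    (\<forall>(\<epsilon>::real) (\<delta>::real) (m::nat) (d::nat).
       0 < \<epsilon> \<and> \<epsilon> < 1 \<and> 0 < \<delta> \<and> \<delta> < 1 \<and> 0 < m \<and>
       real m < c / (\<epsilon> * \<delta>) \<and> 1 \<le> d \<longrightarrow>
       (\<exists>A. A \<noteq> {#} \<and> set_mset A \<subseteq> Rd d \<and>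
          measure_pmf.prob (sample_pmf m A)
            {S. \<not> approx_mean d \<epsilon> A (emp_mean m S)} > \<delta>))"
proof (intro exI[of _ "1 / 16"] conjI allI impI)
  fix \<epsilon> \<delta> :: real and m d :: nat
  assume H: "0 < \<epsilon> \<and> \<epsilon> < 1 \<and> 0 < \<delta> \<and> \<delta> < 1 \<and> 0 < m \<and>
       real m < (1 / 16) / (\<epsilon> * \<delta>) \<and> 1 \<le> d"
  then have "0 < \<epsilon> * \<delta>" "real m < (1 / 16) / (\<epsilon> * \<delta>)"
    by simp_all
  then have "16 * \<epsilon> * \<delta> * real m < 1"
    by (simp add: field_simps)
  then obtain n where "\<delta> < measure_pmf.prob (sample_pmf m (spike n))
      {S. \<not> approx_mean d \<epsilon> (spike n) (emp_mean m S)}"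
    using H spike_fails_small_delta spike_fails_large_delta by (metis linorder_not_le)
  then show "\<exists>A. A \<noteq> {#} \<and> set_mset A \<subseteq> Rd d \<and>
      measure_pmf.prob (sample_pmf m A) {S. \<not> approx_mean d \<epsilon> A (emp_mean m S)} > \<delta>"
    using H spike_nonempty set_mset_spike_subset_Rd by blast
qed simp

end
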